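(* In the Sinkhorn setting described in the context, for all integers $t\ge0$, $$H(\pi_*|\pi_{2t+2})-H(\pi_*|\pi_{2t})=-\big[H(\mu|\mu_{2t})+H(\nu|\nu_{2t+1})\big]\le-\big[H(\mu_{2t+2}|\mu)+H(\mu|\mu_{2t+2})\big]\le-H(\mu_{2t+2}|\mu).$$
   Context: Sinkhorn setting: $(\mathsf{X},\mu)$, $(\mathsf{Y},\nu)$ are Polish probability spaces, $c:\mathsf{X}\times\mathsf{Y}\to\mathbb{R}$ is measurable, $e^{-c}\in L^1(\mu\otimes\nu)$, and $\mathcal{C}_1(\mu,\nu):=\inf_{\pi\in\Pi(\mu,\nu)}\int c\,d\pi+H(\pi|\mu\otimes\nu)$ is finite, where $\Pi(\mu,\nu)$ is the set of couplings and $H(\rho|\sigma)=\int\log\frac{d\rho}{d\sigma}d\rho$ if $\rho\ll\sigma$, $+\infty$ otherwise. $\pi_*$ is the unique minimizer; $d\pi_*=e^{\varphi_*\oplus\psi_*-c}d(\mu\otimes\nu)$ with potentials $\varphi_*,\psi_*$ (unique up to $(\varphi_*-a,\psi_*+a)$), $(\varphi\oplus\psi)(x,y)=\varphi(x)+\psi(y)$. Let $\xi=\int e^{-c}d(\mu\otimes\nu)$ and $dR=\xi^{-1}e^{-c}d(\mu\otimes\nu)$. Sinkhorn iterates: $\varphi_0:=0$, and for $t\ge0$, $\psi_t(y):=-\log\int e^{\varphi_t(x)-c(x,y)}\mu(dx)$, $\varphi_{t+1}(x):=-\log\int e^{\psi_t(y)-c(x,y)}\nu(dy)$; set $\psi_{-1}:=-\log\xi$.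 Define probability measures $d\pi_{2t}=e^{\varphi_t\oplus\psi_t-c}d(\mu\otimes\nu)$ and $d\pi_{2t-1}=e^{\varphi_t\oplus\psi_{t-1}-c}d(\mu\otimes\nu)$ for $t\ge0$ (so $\pi_{-1}=R$). Then $\pi_{2t}$ has marginals $(\mu_{2t},\nu)$ and $\pi_{2t-1}$ has marginals $(\mu,\nu_{2t-1})$, with $d\mu_{2t}/d\mu=e^{\varphi_t-\varphi_{t+1}}$ and $d\nu_{2t-1}/d\nu=e^{\psi_{t-1}-\psi_t}$. *)

theory Defs
  imports "HOL-Probability.Probability"
begin

definition rel_entropy :: "'a measure \<Rightarrow> 'a measure \<Rightarrow> ereal" where
  "rel_entropy \<rho> \<sigma> =
    (if sets \<rho> = sets \<sigma> \<and> absolutely_continuous \<sigma> \<rho> then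
       (let f = (\<lambda>x. enn2real (RN_deriv \<sigma> \<rho> x)) in
         enn2ereal (\<integral>\<^sup>+ x. ennreal (max 0 (ln (f x))) \<partial>\<rho>)
         - enn2ereal (\<integral>\<^sup>+ x. ennreal (max 0 (- ln (f x))) \<partial>\<rho>))
     else \<infinity>)"

definition couplings :: "'a measure \<Rightarrow> 'b measure \<Rightarrow> ('a \<times> 'b) measure set" where
  "couplings \<mu> \<nu> = {\<pi>. sets \<pi> = sets (\<mu> \<Otimes>\<^sub>M \<nu>) \<and> prob_space \<pi>
      \<and> distr \<pi> \<mu> fst = \<mu> \<and> distr \<pi> \<nu> snd = \<nu>}"

definition entropic_cost ::
  "'a measure \<Rightarrow> 'b measure \<Rightarrow> ('a \<times> 'b \<Rightarrow> real) \<Rightarrow> ('a \<times> 'b) measure \<Rightarrow> ereal" where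
  "entropic_cost \<mu> \<nu> c \<pi> =
     enn2ereal (\<integral>\<^sup>+ z. ennreal (max 0 (c z)) \<partial>\<pi>)
     - enn2ereal (\<integral>\<^sup>+ z. ennreal (max 0 (- c z)) \<partial>\<pi>)
     + rel_entropy \<pi> (\<mu> \<Otimes>\<^sub>M \<nu>)"

definition sk_psi_of :: "'a measure \<Rightarrow> ('a \<times> 'b \<Rightarrow> real) \<Rightarrow> ('a \<Rightarrow> real) \<Rightarrow> 'b \<Rightarrow> real" where
  "sk_psi_of \<mu> c \<phi> y = - ln (enn2real (\<integral>\<^sup>+ x. ennreal (exp (\<phi> x - c (x, y))) \<partial>\<mu>))"

fun sk_phi :: "'a measure \<Rightarrow> 'b measure \<Rightarrow> ('a \<times> 'b \<Rightarrow> real) \<Rightarrow> nat \<Rightarrow> 'a \<Rightarrow> real" where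
  "sk_phi \<mu> \<nu> c 0 = (\<lambda>x. 0)"
| "sk_phi \<mu> \<nu> c (Suc t) = (\<lambda>x. - ln (enn2real (\<integral>\<^sup>+ y.
        ennreal (exp (sk_psi_of \<mu> c (sk_phi \<mu> \<nu> c t) y - c (x, y))) \<partial>\<nu>)))"

definition sk_psi :: "'a measure \<Rightarrow> 'b measure \<Rightarrow> ('a \<times> 'b \<Rightarrow> real) \<Rightarrow> nat \<Rightarrow> 'b \<Rightarrow> real" where
  "sk_psi \<mu> \<nu> c t = sk_psi_of \<mu> c (sk_phi \<mu> \<nu> c t)"

text \<open>d pi_{2t} = exp(phi_t + psi_t - c) d(mu x nu)\<close>
definition sk_pi_even :: "'a measure \<Rightarrow> 'b measure \<Rightarrow> ('a \<times> 'b \<Rightarrow> real) \<Rightarrow> nat \<Rightarrow> ('a \<times> 'b) measure" where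
  "sk_pi_even \<mu> \<nu> c t = density (\<mu> \<Otimes>\<^sub>M \<nu>)
     (\<lambda>(x, y). ennreal (exp (sk_phi \<mu> \<nu> c t x + sk_psi \<mu> \<nu> c t y - c (x, y))))"

text \<open>d pi_{2t+1} = exp(phi_{t+1} + psi_t - c) d(mu x nu)\<close>
definition sk_pi_odd :: "'a measure \<Rightarrow> 'b measure \<Rightarrow> ('a \<times> 'b \<Rightarrow> real) \<Rightarrow> nat \<Rightarrow> ('a \<times> 'b) measure" where
  "sk_pi_odd \<mu> \<nu> c t = density (\<mu> \<Otimes>\<^sub>M \<nu>)
     (\<lambda>(x, y). ennreal (exp (sk_phi \<mu> \<nu> c (Suc t) x + sk_psi \<mu> \<nu> c t y - c (x, y))))"

text \<open>mu_{2t}: first marginal of pi_{2t}; nu_{2t+1}: second marginal of pi_{2t+1}.\<close>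
definition sk_mu_even :: "'a measure \<Rightarrow> 'b measure \<Rightarrow> ('a \<times> 'b \<Rightarrow> real) \<Rightarrow> nat \<Rightarrow> 'a measure" where
  "sk_mu_even \<mu> \<nu> c t = distr (sk_pi_even \<mu> \<nu> c t) \<mu> fst"

definition sk_nu_odd :: "'a measure \<Rightarrow> 'b measure \<Rightarrow> ('a \<times> 'b \<Rightarrow> real) \<Rightarrow> nat \<Rightarrow> 'b measure" where
  "sk_nu_odd \<mu> \<nu> c t = distr (sk_pi_odd \<mu> \<nu> c t) \<nu> snd"

end

theory Submission
  imports Defs
begin

text \<open>The Gibbs measures \<open>\<pi>\<^sub>2\<^sub>t = exp(\<phi>\<^sub>t \<oplus> \<psi>\<^sub>t - c) (\<mu> \<otimes> \<nu>)\<close> satisfy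
  \<open>log d\<pi>\<^sub>2\<^sub>t\<^sub>+\<^sub>2/d\<pi>\<^sub>2\<^sub>t = (\<phi>\<^sub>t\<^sub>+\<^sub>1 - \<phi>\<^sub>t) \<oplus> (\<psi>\<^sub>t\<^sub>+\<^sub>1 - \<psi>\<^sub>t)\<close>. Integrating this against
  \<open>\<pi>\<^sub>*\<close>, whose marginals are \<open>\<mu>\<close> and \<open>\<nu>\<close>, gives the identity; finite entropic cost of \<open>\<pi>\<^sub>*\<close> is
  what makes all potentials integrable. The inequalities are instances of Gibbs' inequality
  \<open>\<integral> u dP \<le> \<integral> v dP\<close> whenever \<open>\<integral> exp(u - v) dP \<le> 1\<close>, on \<open>P = \<pi>\<^sub>2\<^sub>t\<^sub>+\<^sub>1\<close> and \<open>P = \<pi>\<^sub>2\<^sub>t\<^sub>+\<^sub>2\<close>: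
  after a change of density, these exponential moments are total masses of normalized marginals.\<close>

section \<open>Extended integrals and Gibbs' inequality\<close>

text \<open>Written like the integrals in \<open>rel_entropy\<close> and \<open>entropic_cost\<close>; as \<open>\<infinity> - \<infinity> = \<infinity>\<close>
  in \<open>ereal\<close>, it is \<open>\<infinity>\<close> whenever the positive part diverges.\<close>
definition ext_integral :: "'a measure \<Rightarrow> ('a \<Rightarrow> real) \<Rightarrow> ereal" where
  "ext_integral M f = enn2ereal (\<integral>\<^sup>+x. ennreal (f x) \<partial>M) - enn2ereal (\<integral>\<^sup>+x. ennreal (- f x) \<partial>M)"

lemma ext_integral_cong_AE: "AE x in M. f x = g x \<Longrightarrow> ext_integral M f = ext_integral M g"
  unfolding ext_integral_def
  by (intro arg_cong2[where f="(-)"] arg_cong[where f=enn2ereal] nn_integral_cong_AE) auto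

lemma ext_integral_eqI:
  assumes "(\<integral>\<^sup>+x. ennreal (f x) \<partial>M) = (\<integral>\<^sup>+y. ennreal (g y) \<partial>N)"
    and "(\<integral>\<^sup>+x. ennreal (- f x) \<partial>M) = (\<integral>\<^sup>+y. ennreal (- g y) \<partial>N)"
  shows "ext_integral M f = ext_integral N g"
  using assms by (simp add: ext_integral_def)

lemma ext_integral_distr:
  assumes "T \<in> measurable M N" "f \<in> borel_measurable N"
  shows "ext_integral (distr M N T) f = ext_integral M (\<lambda>x. f (T x))"
  using assms by (simp add: ext_integral_def nn_integral_distr)

lemma ext_integral_eq_integral:
  assumes "integrable M f"
  shows "ext_integral M f = ereal (\<integral>x. f x \<partial>M)"
proof -
  obtain r q where "(\<integral>\<^sup>+x. ennreal (f x) \<partial>M) = ennreal r" "(\<integral>\<^sup>+x. ennreal (- f x) \<partial>M) = ennreal q"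
    "(\<integral>x. f x \<partial>M) = r - q" "0 \<le> r" "0 \<le> q"
    using integrableE[OF assms] by metis
  then show ?thesis by (simp add: ext_integral_def)
qed

lemma integrable_iff_ext_integral_finite:
  assumes "f \<in> borel_measurable M"
  shows "integrable M f \<longleftrightarrow> \<bar>ext_integral M f\<bar> \<noteq> \<infinity>"
  using assms unfolding real_integrable_def ext_integral_def
  by (cases "\<integral>\<^sup>+x. ennreal (f x) \<partial>M"; cases "\<integral>\<^sup>+x. ennreal (- f x) \<partial>M") auto

lemma nn_integral_ennreal_le_add:
  assumes [measurable]: "v \<in> borel_measurable M" "w \<in> borel_measurable M"
    and le: "\<And>x. u x \<le> v x + w x"
  shows "(\<integral>\<^sup>+x. ennreal (u x) \<partial>M) \<le> (\<integral>\<^sup>+x. ennreal (v x) \<partial>M) + (\<integral>\<^sup>+x. ennreal (w x) \<partial>M)"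
proof -
  have "ennreal (u x) \<le> ennreal (v x) + ennreal (w x)" for x
  proof -
    have "ennreal (u x) \<le> ennreal (max 0 (v x) + max 0 (w x))"
      using le[of x] by (intro ennreal_leI) linarith
    then show ?thesis by (simp add: ennreal_plus ennreal_max_0)
  qed
  then have "(\<integral>\<^sup>+x. ennreal (u x) \<partial>M) \<le> (\<integral>\<^sup>+x. ennreal (v x) + ennreal (w x) \<partial>M)"
    by (rule nn_integral_mono)
  also have "\<dots> = (\<integral>\<^sup>+x. ennreal (v x) \<partial>M) + (\<integral>\<^sup>+x. ennreal (w x) \<partial>M)"
    by (rule nn_integral_add) auto
  finally show ?thesis .
qed

lemma nn_integral_ennreal_le_exp: "(\<integral>\<^sup>+x. ennreal (f x) \<partial>M) \<le> (\<integral>\<^sup>+x. ennreal (exp (f x)) \<partial>M)"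
  by (intro nn_integral_mono ennreal_leI) (use exp_ge_add_one_self in \<open>smt (verit)\<close>)

lemma nn_integral_ennreal_finite_le_add:
  assumes "v \<in> borel_measurable M" "w \<in> borel_measurable M" "\<And>x. u x \<le> v x + w x"
    and "(\<integral>\<^sup>+x. ennreal (v x) \<partial>M) < \<infinity>" "(\<integral>\<^sup>+x. ennreal (w x) \<partial>M) < \<infinity>"
  shows "(\<integral>\<^sup>+x. ennreal (u x) \<partial>M) < \<infinity>"
  using nn_integral_ennreal_le_add[OF assms(1-3)] assms(4,5) by (simp add: order.strict_trans1)

lemma nn_integral_neg_finite_of_exp_diff:
  assumes "integrable M f" "g \<in> borel_measurable M"
    and "(\<integral>\<^sup>+x. ennreal (exp (f x - g x)) \<partial>M) < \<infinity>"
  shows "(\<integral>\<^sup>+x. ennreal (- g x) \<partial>M) < \<infinity>"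
proof (rule nn_integral_ennreal_finite_le_add)
  show "(\<integral>\<^sup>+x. ennreal (f x - g x) \<partial>M) < \<infinity>"
    using nn_integral_ennreal_le_exp assms(3) by (rule le_less_trans)
  show "(\<integral>\<^sup>+x. ennreal (- f x) \<partial>M) < \<infinity>"
    using assms(1) by (simp add: real_integrable_def less_top)
qed (use assms in auto)

lemma ext_integral_mono_exp_diff:
  assumes "prob_space M" and [measurable]: "u \<in> borel_measurable M" "v \<in> borel_measurable M"
    and exp_le: "(\<integral>\<^sup>+x. ennreal (exp (u x - v x)) \<partial>M) \<le> 1"
  shows "ext_integral M u \<le> ext_integral M v"
proof -
  interpret prob_space M by fact
  define k where "k x = exp (u x - v x) - 1" for x
  have int_exp: "integrable M (\<lambda>x. exp (u x - v x))"
    using exp_le by (intro integrableI_nonneg) (auto intro: le_less_trans)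
  then have int_k: "integrable M k" unfolding k_def by simp
  have "(\<integral>x. exp (u x - v x) \<partial>M) \<le> 1"
    using exp_le int_exp by (subst integral_eq_nn_integral) (auto simp: enn2real_leI)
  then have int_k_nonpos: "(\<integral>x. k x \<partial>M) \<le> 0"
    unfolding k_def using int_exp by (simp add: prob_space)
  have u_le: "u x \<le> v x + k x" for x
    using exp_ge_add_one_self[of "u x - v x"] unfolding k_def by linarith
  have k_pos: "(\<integral>\<^sup>+x. ennreal (k x) \<partial>M) < \<infinity>"
    using int_k by (simp add: real_integrable_def less_top)
  have u_pos: "(\<integral>\<^sup>+x. ennreal (u x) \<partial>M) < \<infinity>" if "(\<integral>\<^sup>+x. ennreal (v x) \<partial>M) < \<infinity>"
    by (rule nn_integral_ennreal_finite_le_add[where v=v and w=k])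
      (use that k_pos in \<open>simp_all add: borel_measurable_integrable[OF int_k] u_le\<close>)
  have v_neg: "(\<integral>\<^sup>+x. ennreal (- v x) \<partial>M) < \<infinity>" if "(\<integral>\<^sup>+x. ennreal (- u x) \<partial>M) < \<infinity>"
    by (rule nn_integral_ennreal_finite_le_add[where v="\<lambda>x. - u x" and w=k])
      (use that k_pos u_le[THEN le_imp_neg_le] in \<open>simp_all add: borel_measurable_integrable[OF int_k] algebra_simps\<close>)
  show ?thesis
  proof (cases "(\<integral>\<^sup>+x. ennreal (v x) \<partial>M) < \<infinity> \<and> (\<integral>\<^sup>+x. ennreal (- u x) \<partial>M) < \<infinity>")
    case True
    then have int_u: "integrable M u" and int_v: "integrable M v"
      using u_pos v_neg by (auto simp: real_integrable_def less_top)
    have "(\<integral>x. u x \<partial>M) \<le> (\<integral>x. v x + k x \<partial>M)"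
      using int_u int_v int_k u_le by (intro integral_mono) auto
    also have "\<dots> \<le> (\<integral>x. v x \<partial>M)"
      using int_v int_k int_k_nonpos by simp
    finally show ?thesis
      using int_u int_v by (simp add: ext_integral_eq_integral)
  next
    case False
    then show ?thesis
      using u_pos by (cases "\<integral>\<^sup>+x. ennreal (u x) \<partial>M"; cases "\<integral>\<^sup>+x. ennreal (v x) \<partial>M")
        (auto simp: ext_integral_def less_top[symmetric])
  qed
qed

lemma rel_entropy_eq_ext_integral:
  assumes "sets \<rho> = sets \<sigma>" "absolutely_continuous \<sigma> \<rho>"
  shows "rel_entropy \<rho> \<sigma> = ext_integral \<rho> (\<lambda>x. ln (enn2real (RN_deriv \<sigma> \<rho> x)))"
  using assms by (simp add: rel_entropy_def ext_integral_def ennreal_max_0)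

lemma rel_entropy_density:
  assumes [measurable]: "p \<in> borel_measurable N" "q \<in> borel_measurable N"
    and p_pos: "\<And>x. x \<in> space N \<Longrightarrow> p x > 0" and q_nonneg: "\<And>x. x \<in> space N \<Longrightarrow> q x \<ge> 0"
    and "finite_measure (density N p)"
  shows "rel_entropy (density N q) (density N p) = ext_integral (density N q) (\<lambda>x. ln (q x / p x))"
proof -
  let ?P = "density N p" and ?Q = "density N q"
  interpret P: finite_measure ?P by fact
  have ac: "absolutely_continuous ?P ?Q"
    unfolding absolutely_continuous_def
  proof
    fix A assume "A \<in> null_sets ?P"
    then have "A \<in> sets N" "AE x in N. x \<in> A \<longrightarrow> ennreal (p x) = 0"
      by (auto simp: null_sets_density_iff)
    moreover from this(2) AE_space have "AE x in N. x \<in> A \<longrightarrow> ennreal (q x) = 0"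
      by eventually_elim (auto simp: ennreal_eq_0_iff dest!: p_pos)
    ultimately show "A \<in> null_sets ?Q" by (simp add: null_sets_density_iff)
  qed
  have "density ?P (\<lambda>x. q x / p x) = density N (\<lambda>x. ennreal (p x) * ennreal (q x / p x))"
    by (rule density_density_eq) auto
  also have "\<dots> = ?Q"
  proof (intro density_cong AE_I2)
    fix x assume "x \<in> space N"
    with p_pos q_nonneg have "p x > 0" "q x \<ge> 0" by auto
    then show "ennreal (p x) * ennreal (q x / p x) = ennreal (q x)"
      by (simp add: ennreal_mult[symmetric])
  qed simp_all
  finally have "AE x in ?P. ennreal (q x / p x) = RN_deriv ?P ?Q x"
    by (intro P.RN_deriv_unique) simp_all
  then have "AE x in ?Q. ennreal (q x / p x) = RN_deriv ?P ?Q x"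
    by (rule absolutely_continuous_AE[OF _ ac, rotated]) simp
  with AE_space have "AE x in ?Q. ln (enn2real (RN_deriv ?P ?Q x)) = ln (q x / p x)"
  proof eventually_elim
    case (elim x)
    with p_pos q_nonneg have "p x > 0" "q x \<ge> 0" by auto
    then show ?case by (simp flip: elim(2))
  qed
  then show ?thesis
    by (simp add: rel_entropy_eq_ext_integral[OF _ ac] ext_integral_cong_AE)
qed

lemma distr_density_eq_density:
  assumes T: "T \<in> measurable M N" and [measurable]: "f \<in> borel_measurable M" "p \<in> borel_measurable N"
    and eq: "\<And>g. g \<in> borel_measurable N \<Longrightarrow> (\<integral>\<^sup>+z. g (T z) \<partial>density M f) = (\<integral>\<^sup>+x. p x * g x \<partial>N)"
  shows "distr (density M f) N T = density N p"
proof (rule measure_eqI)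
  fix A assume "A \<in> sets (distr (density M f) N T)"
  then have [measurable]: "A \<in> sets N" by simp
  have "emeasure (distr (density M f) N T) A = emeasure (density M f) (T -` A \<inter> space M)"
    using T by (simp add: emeasure_distr)
  also have "\<dots> = (\<integral>\<^sup>+z. indicator (T -` A \<inter> space M) z \<partial>density M f)"
    using T by (simp add: nn_integral_indicator)
  also have "\<dots> = (\<integral>\<^sup>+z. indicator A (T z) \<partial>density M f)"
    by (rule nn_integral_cong) (simp add: indicator_def)
  also have "\<dots> = emeasure (density N p) A"
    by (simp add: eq emeasure_density)
  finally show "emeasure (distr (density M f) N T) A = emeasure (density N p) A" .
qed simp

lemma ennreal_exp_add: "ennreal (exp (a + b)) = ennreal (exp a) * ennreal (exp b)"
  by (simp add: exp_add ennreal_mult)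

lemma ennreal_exp_add_mult: "ennreal (exp (p + q)) * r = ennreal (exp p) * (ennreal (exp q) * r)"
  by (simp add: ennreal_exp_add mult.assoc)

lemma ennreal_mult_exp:
  assumes "r \<noteq> 0" "r \<noteq> \<top>"
  shows "r * ennreal (exp a) = ennreal (exp (a + ln (enn2real r)))"
proof -
  obtain s where "r = ennreal s" "s > 0"
    using assms by (cases r) (auto simp: less_le)
  then show ?thesis by (simp add: exp_add ennreal_mult mult.commute)
qed

lemma nn_integral_exp_neq_zero:
  assumes "prob_space M" "f \<in> borel_measurable M"
  shows "(\<integral>\<^sup>+x. ennreal (exp (f x)) \<partial>M) \<noteq> 0"
proof
  assume "(\<integral>\<^sup>+x. ennreal (exp (f x)) \<partial>M) = 0"
  then have "AE x in M. False"
    using assms(2) by (subst (asm) nn_integral_0_iff_AE) auto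
  then show False using prob_space.AE_False[OF assms(1)] by simp
qed

section \<open>Sinkhorn iterates as Gibbs measures\<close>

declare sk_phi.simps(2) [simp del]

locale sinkhorn =
  fixes \<mu> :: "'a measure" and \<nu> :: "'b measure" and c :: "'a \<times> 'b \<Rightarrow> real"
  assumes prob_space_\<mu>: "prob_space \<mu>" and prob_space_\<nu>: "prob_space \<nu>"
    and c_measurable[measurable]: "c \<in> borel_measurable (\<mu> \<Otimes>\<^sub>M \<nu>)"
    and integrable_exp_neg_c: "integrable (\<mu> \<Otimes>\<^sub>M \<nu>) (\<lambda>z. exp (- c z))"
begin

sublocale pair_prob_space \<mu> \<nu>
  using prob_space_\<mu> prob_space_\<nu> by (simp add: pair_prob_space_def pair_sigma_finite_def prob_space_imp_sigma_finite)

abbreviation "M \<equiv> \<mu> \<Otimes>\<^sub>M \<nu>"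
abbreviation "phi \<equiv> sk_phi \<mu> \<nu> c"
abbreviation "psi \<equiv> sk_psi \<mu> \<nu> c"
abbreviation "psi_of \<equiv> sk_psi_of \<mu> c"

definition Z :: "('a \<Rightarrow> real) \<Rightarrow> 'b \<Rightarrow> ennreal" where
  "Z a y = (\<integral>\<^sup>+x. ennreal (exp (a x - c (x, y))) \<partial>\<mu>)"

definition W :: "('b \<Rightarrow> real) \<Rightarrow> 'a \<Rightarrow> ennreal" where
  "W b x = (\<integral>\<^sup>+y. ennreal (exp (b y - c (x, y))) \<partial>\<nu>)"

definition phi_of :: "('b \<Rightarrow> real) \<Rightarrow> 'a \<Rightarrow> real" where
  "phi_of b x = - ln (enn2real (W b x))"

definition gibbs :: "('a \<Rightarrow> real) \<Rightarrow> ('b \<Rightarrow> real) \<Rightarrow> ('a \<times> 'b) measure" where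
  "gibbs a b = density M (\<lambda>(x, y). ennreal (exp (a x + b y - c (x, y))))"

lemma sets_gibbs[measurable_cong]: "sets (gibbs a b) = sets M"
  by (simp add: gibbs_def)

lemma psi_of_eq: "psi_of a y = - ln (enn2real (Z a y))"
  by (simp add: sk_psi_of_def Z_def)

lemma psi_eq: "psi t = psi_of (phi t)"
  by (simp add: sk_psi_def)

lemma phi_Suc: "phi (Suc t) = phi_of (psi t)"
  by (simp add: fun_eq_iff phi_of_def W_def sk_phi.simps(2) sk_psi_def)

lemma sk_pi_even_eq: "sk_pi_even \<mu> \<nu> c t = gibbs (phi t) (psi t)"
  by (simp add: sk_pi_even_def gibbs_def)

lemma sk_pi_odd_eq: "sk_pi_odd \<mu> \<nu> c t = gibbs (phi (Suc t)) (psi t)"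
  by (simp add: sk_pi_odd_def gibbs_def)

lemma c_measurable_fst[measurable]: "y \<in> space \<nu> \<Longrightarrow> (\<lambda>x. c (x, y)) \<in> borel_measurable \<mu>"
  by measurable

lemma c_measurable_snd[measurable]: "x \<in> space \<mu> \<Longrightarrow> (\<lambda>y. c (x, y)) \<in> borel_measurable \<nu>"
  by measurable

lemma Z_measurable:
  assumes [measurable]: "a \<in> borel_measurable \<mu>"
  shows "Z a \<in> borel_measurable \<nu>"
  unfolding Z_def by measurable

lemma W_measurable:
  assumes [measurable]: "b \<in> borel_measurable \<nu>"
  shows "W b \<in> borel_measurable \<mu>"
  unfolding W_def by measurable

lemma Z_neq_zero:
  assumes [measurable]: "a \<in> borel_measurable \<mu>" and "y \<in> space \<nu>"
  shows "Z a y \<noteq> 0"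
  unfolding Z_def using assms(2) by (intro nn_integral_exp_neq_zero[OF prob_space_\<mu>]) measurable

lemma W_neq_zero:
  assumes [measurable]: "b \<in> borel_measurable \<nu>" and "x \<in> space \<mu>"
  shows "W b x \<noteq> 0"
  unfolding W_def using assms(2) by (intro nn_integral_exp_neq_zero[OF prob_space_\<nu>]) measurable

lemma phi_psi_measurable: "phi t \<in> borel_measurable \<mu> \<and> psi t \<in> borel_measurable \<nu>"
proof (induction t)
  case 0
  show ?case
    using Z_measurable[of "phi 0"] by (simp add: psi_eq psi_of_eq[abs_def])
next
  case (Suc t)
  then have "phi (Suc t) \<in> borel_measurable \<mu>"
    using W_measurable[of "psi t"] by (simp add: phi_Suc phi_of_def[abs_def])
  then show ?case
    using Z_measurable[of "phi (Suc t)"] by (simp add: psi_eq psi_of_eq[abs_def])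
qed

lemma phi_measurable[measurable]: "phi t \<in> borel_measurable \<mu>"
  and psi_measurable[measurable]: "psi t \<in> borel_measurable \<nu>"
  using phi_psi_measurable by auto

lemma nn_integral_gibbs:
  assumes [measurable]: "a \<in> borel_measurable \<mu>" "b \<in> borel_measurable \<nu>" "g \<in> borel_measurable M"
  shows "(\<integral>\<^sup>+z. g z \<partial>gibbs a b) = (\<integral>\<^sup>+z. ennreal (exp (a (fst z) + b (snd z) - c z)) * g z \<partial>M)"
  unfolding gibbs_def by (subst nn_integral_density) (auto simp: split_beta')

lemma nn_integral_gibbs_fst:
  assumes [measurable]: "a \<in> borel_measurable \<mu>" "b \<in> borel_measurable \<nu>" "g \<in> borel_measurable \<mu>"
  shows "(\<integral>\<^sup>+z. g (fst z) \<partial>gibbs a b) = (\<integral>\<^sup>+x. W b x * (ennreal (exp (a x)) * g x) \<partial>\<mu>)"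
proof -
  have "(\<integral>\<^sup>+z. g (fst z) \<partial>gibbs a b)
      = (\<integral>\<^sup>+x. \<integral>\<^sup>+y. ennreal (exp (a x + b y - c (x, y))) * g x \<partial>\<nu> \<partial>\<mu>)"
    by (simp add: nn_integral_gibbs M2.nn_integral_fst[symmetric])
  also have "\<dots> = (\<integral>\<^sup>+x. W b x * (ennreal (exp (a x)) * g x) \<partial>\<mu>)"
  proof (rule nn_integral_cong)
    fix x assume x: "x \<in> space \<mu>"
    have "(\<integral>\<^sup>+y. ennreal (exp (a x + b y - c (x, y))) * g x \<partial>\<nu>)
        = (\<integral>\<^sup>+y. ennreal (exp (b y - c (x, y))) * (ennreal (exp (a x)) * g x) \<partial>\<nu>)"
      by (intro nn_integral_cong) (metis add.commute add_diff_eq ennreal_exp_add_mult)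
    also have "\<dots> = W b x * (ennreal (exp (a x)) * g x)"
      unfolding W_def using x by (intro nn_integral_multc) measurable
    finally show "(\<integral>\<^sup>+y. ennreal (exp (a x + b y - c (x, y))) * g x \<partial>\<nu>) = W b x * (ennreal (exp (a x)) * g x)" .
  qed
  finally show ?thesis .
qed

lemma nn_integral_gibbs_snd:
  assumes [measurable]: "a \<in> borel_measurable \<mu>" "b \<in> borel_measurable \<nu>" "g \<in> borel_measurable \<nu>"
  shows "(\<integral>\<^sup>+z. g (snd z) \<partial>gibbs a b) = (\<integral>\<^sup>+y. Z a y * (ennreal (exp (b y)) * g y) \<partial>\<nu>)"
proof -
  have "(\<integral>\<^sup>+z. g (snd z) \<partial>gibbs a b)
      = (\<integral>\<^sup>+y. \<integral>\<^sup>+x. ennreal (exp (a x + b y - c (x, y))) * g y \<partial>\<mu> \<partial>\<nu>)"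
    by (simp add: nn_integral_gibbs nn_integral_snd[symmetric])
  also have "\<dots> = (\<integral>\<^sup>+y. Z a y * (ennreal (exp (b y)) * g y) \<partial>\<nu>)"
  proof (rule nn_integral_cong)
    fix y assume y: "y \<in> space \<nu>"
    have "(\<integral>\<^sup>+x. ennreal (exp (a x + b y - c (x, y))) * g y \<partial>\<mu>)
        = (\<integral>\<^sup>+x. ennreal (exp (a x - c (x, y))) * (ennreal (exp (b y)) * g y) \<partial>\<mu>)"
      by (intro nn_integral_cong) (metis add.commute diff_add_eq ennreal_exp_add_mult)
    also have "\<dots> = Z a y * (ennreal (exp (b y)) * g y)"
      unfolding Z_def using y by (intro nn_integral_multc) measurable
    finally show "(\<integral>\<^sup>+x. ennreal (exp (a x + b y - c (x, y))) * g y \<partial>\<mu>) = Z a y * (ennreal (exp (b y)) * g y)" .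
  qed
  finally show ?thesis .
qed

lemma nn_integral_gibbs_fst_normalized:
  assumes [measurable]: "a \<in> borel_measurable \<mu>" "b \<in> borel_measurable \<nu>" "g \<in> borel_measurable \<mu>"
    and W_finite: "AE x in \<mu>. W b x \<noteq> \<top>"
  shows "(\<integral>\<^sup>+z. g (fst z) \<partial>gibbs a b) = (\<integral>\<^sup>+x. ennreal (exp (a x - phi_of b x)) * g x \<partial>\<mu>)"
  unfolding nn_integral_gibbs_fst[OF assms(1-3)]
proof (rule nn_integral_cong_AE)
  from W_finite AE_space show "AE x in \<mu>. W b x * (ennreal (exp (a x)) * g x) = ennreal (exp (a x - phi_of b x)) * g x"
    by eventually_elim (simp add: phi_of_def ennreal_mult_exp W_neq_zero mult.assoc[symmetric])
qed

lemma nn_integral_gibbs_snd_normalized: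
  assumes [measurable]: "a \<in> borel_measurable \<mu>" "b \<in> borel_measurable \<nu>" "g \<in> borel_measurable \<nu>"
    and Z_finite: "AE y in \<nu>. Z a y \<noteq> \<top>"
  shows "(\<integral>\<^sup>+z. g (snd z) \<partial>gibbs a b) = (\<integral>\<^sup>+y. ennreal (exp (b y - psi_of a y)) * g y \<partial>\<nu>)"
  unfolding nn_integral_gibbs_snd[OF assms(1-3)]
proof (rule nn_integral_cong_AE)
  from Z_finite AE_space show "AE y in \<nu>. Z a y * (ennreal (exp (b y)) * g y) = ennreal (exp (b y - psi_of a y)) * g y"
    by eventually_elim (simp add: psi_of_eq ennreal_mult_exp Z_neq_zero mult.assoc[symmetric])
qed

lemma AE_W_finite:
  assumes [measurable]: "a \<in> borel_measurable \<mu>" "b \<in> borel_measurable \<nu>"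
    and "finite_measure (gibbs a b)"
  shows "AE x in \<mu>. W b x \<noteq> \<top>"
proof -
  have [measurable]: "W b \<in> borel_measurable \<mu>" by (rule W_measurable) simp
  have "(\<integral>\<^sup>+x. W b x * ennreal (exp (a x)) \<partial>\<mu>) = emeasure (gibbs a b) (space (gibbs a b))"
    using nn_integral_gibbs_fst[of a b "\<lambda>_. 1"] by simp
  then have "(\<integral>\<^sup>+x. W b x * ennreal (exp (a x)) \<partial>\<mu>) \<noteq> \<top>"
    using finite_measure.emeasure_finite[OF assms(3)] by simp
  moreover have product_measurable: "(\<lambda>x. W b x * ennreal (exp (a x))) \<in> borel_measurable \<mu>"
    by measurable
  ultimately have "AE x in \<mu>. W b x * ennreal (exp (a x)) \<noteq> \<top>"
    using nn_integral_noteq_infinite[OF product_measurable] by simp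
  then show ?thesis by eventually_elim (simp add: ennreal_mult_eq_top_iff)
qed

lemma AE_Z_finite:
  assumes [measurable]: "a \<in> borel_measurable \<mu>" "b \<in> borel_measurable \<nu>"
    and "finite_measure (gibbs a b)"
  shows "AE y in \<nu>. Z a y \<noteq> \<top>"
proof -
  have [measurable]: "Z a \<in> borel_measurable \<nu>" by (rule Z_measurable) simp
  have "(\<integral>\<^sup>+y. Z a y * ennreal (exp (b y)) \<partial>\<nu>) = emeasure (gibbs a b) (space (gibbs a b))"
    using nn_integral_gibbs_snd[of a b "\<lambda>_. 1"] by simp
  then have "(\<integral>\<^sup>+y. Z a y * ennreal (exp (b y)) \<partial>\<nu>) \<noteq> \<top>"
    using finite_measure.emeasure_finite[OF assms(3)] by simp
  moreover have product_measurable: "(\<lambda>y. Z a y * ennreal (exp (b y))) \<in> borel_measurable \<nu>"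
    by measurable
  ultimately have "AE y in \<nu>. Z a y * ennreal (exp (b y)) \<noteq> \<top>"
    using nn_integral_noteq_infinite[OF product_measurable] by simp
  then show ?thesis by eventually_elim (simp add: ennreal_mult_eq_top_iff)
qed

lemma prob_space_gibbs_phi_of:
  assumes [measurable]: "b \<in> borel_measurable \<nu>" and "AE x in \<mu>. W b x \<noteq> \<top>"
  shows "prob_space (gibbs (phi_of b) b)"
proof (rule prob_spaceI)
  have [measurable]: "W b \<in> borel_measurable \<mu>" by (rule W_measurable) simp
  have [measurable]: "phi_of b \<in> borel_measurable \<mu>"
    unfolding phi_of_def[abs_def] by measurable
  have "emeasure (gibbs (phi_of b) b) (space (gibbs (phi_of b) b)) = (\<integral>\<^sup>+z. 1 \<partial>gibbs (phi_of b) b)"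
    by simp
  also have "\<dots> = 1"
    using nn_integral_gibbs_fst_normalized[of "phi_of b" b "\<lambda>_. 1"] assms(2)
    by (simp add: M1.emeasure_space_1)
  finally show "emeasure (gibbs (phi_of b) b) (space (gibbs (phi_of b) b)) = 1" .
qed

lemma prob_space_gibbs_psi_of:
  assumes [measurable]: "a \<in> borel_measurable \<mu>" and "AE y in \<nu>. Z a y \<noteq> \<top>"
  shows "prob_space (gibbs a (psi_of a))"
proof (rule prob_spaceI)
  have [measurable]: "Z a \<in> borel_measurable \<nu>" by (rule Z_measurable) simp
  have [measurable]: "psi_of a \<in> borel_measurable \<nu>"
    unfolding psi_of_eq[abs_def] by measurable
  have "emeasure (gibbs a (psi_of a)) (space (gibbs a (psi_of a))) = (\<integral>\<^sup>+z. 1 \<partial>gibbs a (psi_of a))"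
    by simp
  also have "\<dots> = 1"
    using nn_integral_gibbs_snd_normalized[of a "psi_of a" "\<lambda>_. 1"] assms(2)
    by (simp add: M2.emeasure_space_1)
  finally show "emeasure (gibbs a (psi_of a)) (space (gibbs a (psi_of a))) = 1" .
qed

lemma finite_measure_gibbs_0: "finite_measure (gibbs (phi 0) (\<lambda>_. 0))"
proof (rule finite_measureI)
  have "(\<integral>\<^sup>+z. 1 \<partial>gibbs (phi 0) (\<lambda>_. 0)) = (\<integral>\<^sup>+z. ennreal (exp (- c z)) \<partial>M)"
    by (subst nn_integral_gibbs) simp_all
  also have "\<dots> < \<infinity>"
    using integrable_exp_neg_c by (simp add: real_integrable_def less_top)
  finally show "emeasure (gibbs (phi 0) (\<lambda>_. 0)) (space (gibbs (phi 0) (\<lambda>_. 0))) \<noteq> \<infinity>"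
    by simp
qed

text \<open>Each half step of Sinkhorn's algorithm normalizes one marginal; this keeps all partition
  functions finite almost everywhere.\<close>
lemma AE_Z_phi_finite: "AE y in \<nu>. Z (phi t) y \<noteq> \<top>"
proof (induction t)
  case 0
  show ?case by (rule AE_Z_finite[OF _ _ finite_measure_gibbs_0]) simp_all
next
  case (Suc t)
  have "prob_space (gibbs (phi t) (psi t))"
    unfolding psi_eq by (rule prob_space_gibbs_psi_of[OF _ Suc]) simp
  then have "AE x in \<mu>. W (psi t) x \<noteq> \<top>"
    by (intro AE_W_finite prob_space.finite_measure) simp_all
  then have "prob_space (gibbs (phi (Suc t)) (psi t))"
    unfolding phi_Suc by (rule prob_space_gibbs_phi_of[rotated]) simp
  then show ?case
    by (intro AE_Z_finite prob_space.finite_measure) simp_all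
qed

lemma prob_space_gibbs_even: "prob_space (gibbs (phi t) (psi t))"
  unfolding psi_eq by (rule prob_space_gibbs_psi_of[OF _ AE_Z_phi_finite]) simp

lemma AE_W_psi_finite: "AE x in \<mu>. W (psi t) x \<noteq> \<top>"
  by (rule AE_W_finite[OF _ _ prob_space.finite_measure[OF prob_space_gibbs_even]]) measurable

lemma prob_space_gibbs_odd: "prob_space (gibbs (phi (Suc t)) (psi t))"
  unfolding phi_Suc by (rule prob_space_gibbs_phi_of[OF _ AE_W_psi_finite]) simp

lemma nn_integral_gibbs_even_snd:
  assumes [measurable]: "g \<in> borel_measurable \<nu>"
  shows "(\<integral>\<^sup>+z. g (snd z) \<partial>gibbs (phi t) (psi t)) = (\<integral>\<^sup>+y. g y \<partial>\<nu>)"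
  by (subst nn_integral_gibbs_snd_normalized[OF _ _ _ AE_Z_phi_finite]) (simp_all add: psi_eq[symmetric])

lemma nn_integral_gibbs_odd_fst:
  assumes [measurable]: "g \<in> borel_measurable \<mu>"
  shows "(\<integral>\<^sup>+z. g (fst z) \<partial>gibbs (phi (Suc t)) (psi t)) = (\<integral>\<^sup>+x. g x \<partial>\<mu>)"
  by (subst nn_integral_gibbs_fst_normalized[OF _ _ _ AE_W_psi_finite]) (simp_all add: phi_Suc[symmetric])

lemma nn_integral_gibbs_even_fst:
  assumes [measurable]: "g \<in> borel_measurable \<mu>"
  shows "(\<integral>\<^sup>+z. g (fst z) \<partial>gibbs (phi t) (psi t))
    = (\<integral>\<^sup>+x. ennreal (exp (phi t x - phi (Suc t) x)) * g x \<partial>\<mu>)"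
  by (subst nn_integral_gibbs_fst_normalized[OF _ _ _ AE_W_psi_finite]) (simp_all add: phi_Suc[symmetric])

lemma nn_integral_gibbs_odd_snd:
  assumes [measurable]: "g \<in> borel_measurable \<nu>"
  shows "(\<integral>\<^sup>+z. g (snd z) \<partial>gibbs (phi (Suc t)) (psi t))
    = (\<integral>\<^sup>+y. ennreal (exp (psi t y - psi (Suc t) y)) * g y \<partial>\<nu>)"
  by (subst nn_integral_gibbs_snd_normalized[OF _ _ _ AE_Z_phi_finite]) (simp_all add: psi_eq[symmetric])

lemma nn_integral_exp_phi_diff: "(\<integral>\<^sup>+x. ennreal (exp (phi t x - phi (Suc t) x)) \<partial>\<mu>) = 1"
  using nn_integral_gibbs_even_fst[of "\<lambda>_. 1" t] prob_space.emeasure_space_1[OF prob_space_gibbs_even]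
  by simp

lemma nn_integral_exp_psi_diff: "(\<integral>\<^sup>+y. ennreal (exp (psi t y - psi (Suc t) y)) \<partial>\<nu>) = 1"
  using nn_integral_gibbs_odd_snd[of "\<lambda>_. 1" t] prob_space.emeasure_space_1[OF prob_space_gibbs_odd]
  by simp

lemma sk_mu_even_eq: "sk_mu_even \<mu> \<nu> c t = density \<mu> (\<lambda>x. ennreal (exp (phi t x - phi (Suc t) x)))"
  unfolding sk_mu_even_def sk_pi_even_eq gibbs_def
  by (rule distr_density_eq_density) (simp_all add: nn_integral_gibbs_even_fst[unfolded gibbs_def])

lemma sk_nu_odd_eq: "sk_nu_odd \<mu> \<nu> c t = density \<nu> (\<lambda>y. ennreal (exp (psi t y - psi (Suc t) y)))"
  unfolding sk_nu_odd_def sk_pi_odd_eq gibbs_def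
  by (rule distr_density_eq_density) (simp_all add: nn_integral_gibbs_odd_snd[unfolded gibbs_def])

lemma nn_integral_gibbs_reweight:
  assumes [measurable]: "a \<in> borel_measurable \<mu>" "b \<in> borel_measurable \<nu>"
    "a' \<in> borel_measurable \<mu>" "b' \<in> borel_measurable \<nu>"
    "w \<in> borel_measurable M" "w' \<in> borel_measurable M"
    and eq: "\<And>x y. a x + b y + w (x, y) = a' x + b' y + w' (x, y)"
  shows "(\<integral>\<^sup>+z. ennreal (exp (w z)) \<partial>gibbs a b) = (\<integral>\<^sup>+z. ennreal (exp (w' z)) \<partial>gibbs a' b')"
proof -
  have "ennreal (exp (a (fst z) + b (snd z) - c z)) * ennreal (exp (w z))
      = ennreal (exp (a' (fst z) + b' (snd z) - c z)) * ennreal (exp (w' z))" for z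
    using eq[of "fst z" "snd z"] by (simp add: ennreal_exp_add[symmetric] algebra_simps)
  then show ?thesis by (simp add: nn_integral_gibbs)
qed

lemma ext_integral_gibbs_odd_fst:
  assumes [measurable]: "h \<in> borel_measurable \<mu>"
  shows "ext_integral (gibbs (phi (Suc t)) (psi t)) (\<lambda>z. h (fst z)) = ext_integral \<mu> h"
  by (intro ext_integral_eqI nn_integral_gibbs_odd_fst[of "\<lambda>x. ennreal (h x)"]
      nn_integral_gibbs_odd_fst[of "\<lambda>x. ennreal (- h x)"]) measurable

lemma ext_integral_gibbs_even_snd:
  assumes [measurable]: "h \<in> borel_measurable \<nu>"
  shows "ext_integral (gibbs (phi t) (psi t)) (\<lambda>z. h (snd z)) = ext_integral \<nu> h"
  by (intro ext_integral_eqI nn_integral_gibbs_even_snd[of "\<lambda>x. ennreal (h x)"]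
      nn_integral_gibbs_even_snd[of "\<lambda>x. ennreal (- h x)"]) measurable

lemma ext_integral_gibbs_even_fst:
  assumes [measurable]: "h \<in> borel_measurable \<mu>"
  shows "ext_integral (gibbs (phi t) (psi t)) (\<lambda>z. h (fst z)) = ext_integral (sk_mu_even \<mu> \<nu> c t) h"
  unfolding sk_mu_even_def sk_pi_even_eq by (subst ext_integral_distr) measurable

lemma rel_entropy_mu_sk_mu_even:
  "rel_entropy \<mu> (sk_mu_even \<mu> \<nu> c t) = ext_integral \<mu> (\<lambda>x. phi (Suc t) x - phi t x)"
proof -
  have "finite_measure (sk_mu_even \<mu> \<nu> c t)"
    unfolding sk_mu_even_def sk_pi_even_eq
    by (intro prob_space.finite_measure prob_space.prob_space_distr prob_space_gibbs_even) simp
  then have "rel_entropy (density \<mu> (\<lambda>_. ennreal 1)) (sk_mu_even \<mu> \<nu> c t)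
      = ext_integral (density \<mu> (\<lambda>_. ennreal 1)) (\<lambda>x. ln (1 / exp (phi t x - phi (Suc t) x)))"
    unfolding sk_mu_even_eq by (intro rel_entropy_density) simp_all
  then show ?thesis by (simp add: density_1 ln_div)
qed

lemma rel_entropy_nu_sk_nu_odd:
  "rel_entropy \<nu> (sk_nu_odd \<mu> \<nu> c t) = ext_integral \<nu> (\<lambda>y. psi (Suc t) y - psi t y)"
proof -
  have "finite_measure (sk_nu_odd \<mu> \<nu> c t)"
    unfolding sk_nu_odd_def sk_pi_odd_eq
    by (intro prob_space.finite_measure prob_space.prob_space_distr prob_space_gibbs_odd) simp
  then have "rel_entropy (density \<nu> (\<lambda>_. ennreal 1)) (sk_nu_odd \<mu> \<nu> c t)
      = ext_integral (density \<nu> (\<lambda>_. ennreal 1)) (\<lambda>y. ln (1 / exp (psi t y - psi (Suc t) y)))"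
    unfolding sk_nu_odd_eq by (intro rel_entropy_density) simp_all
  then show ?thesis by (simp add: density_1 ln_div)
qed

lemma rel_entropy_sk_mu_even_mu:
  "rel_entropy (sk_mu_even \<mu> \<nu> c t) \<mu> = ext_integral (sk_mu_even \<mu> \<nu> c t) (\<lambda>x. phi t x - phi (Suc t) x)"
proof -
  have "rel_entropy (sk_mu_even \<mu> \<nu> c t) (density \<mu> (\<lambda>_. ennreal 1))
      = ext_integral (sk_mu_even \<mu> \<nu> c t) (\<lambda>x. ln (exp (phi t x - phi (Suc t) x) / 1))"
    unfolding sk_mu_even_eq
    by (intro rel_entropy_density) (simp_all add: density_1 prob_space.finite_measure[OF prob_space_\<mu>])
  then show ?thesis by (simp add: density_1 sk_mu_even_eq)
qed

lemma ext_integral_gibbs_odd_psi_diff_le: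
  "ext_integral (gibbs (phi (Suc t)) (psi t)) (\<lambda>z. psi t (snd z) - psi (Suc t) (snd z))
    \<le> ext_integral (gibbs (phi (Suc t)) (psi t)) (\<lambda>z. phi (Suc t) (fst z) - phi t (fst z))"
proof (rule ext_integral_mono_exp_diff[OF prob_space_gibbs_odd])
  have "(\<integral>\<^sup>+z. ennreal (exp ((psi t (snd z) - psi (Suc t) (snd z)) - (phi (Suc t) (fst z) - phi t (fst z))))
        \<partial>gibbs (phi (Suc t)) (psi t))
      = (\<integral>\<^sup>+z. ennreal (exp (psi t (snd z) - psi (Suc t) (snd z))) \<partial>gibbs (phi t) (psi t))"
      (is "?I = _")
    by (rule nn_integral_gibbs_reweight) auto
  also have "\<dots> = (\<integral>\<^sup>+y. ennreal (exp (psi t y - psi (Suc t) y)) \<partial>\<nu>)"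
    by (rule nn_integral_gibbs_even_snd) measurable
  also have "\<dots> = 1"
    by (rule nn_integral_exp_psi_diff)
  finally show "?I \<le> 1" by simp
qed measurable

lemma ext_integral_gibbs_odd_phi_diff_le:
  "ext_integral (gibbs (phi (Suc t)) (psi t)) (\<lambda>z. phi (Suc (Suc t)) (fst z) - phi (Suc t) (fst z))
    \<le> ext_integral (gibbs (phi (Suc t)) (psi t)) (\<lambda>z. psi t (snd z) - psi (Suc t) (snd z))"
proof (rule ext_integral_mono_exp_diff[OF prob_space_gibbs_odd])
  have "(\<integral>\<^sup>+z. ennreal (exp ((phi (Suc (Suc t)) (fst z) - phi (Suc t) (fst z)) - (psi t (snd z) - psi (Suc t) (snd z))))
        \<partial>gibbs (phi (Suc t)) (psi t))
      = (\<integral>\<^sup>+z. ennreal (exp (phi (Suc (Suc t)) (fst z) - phi (Suc t) (fst z))) \<partial>gibbs (phi (Suc t)) (psi (Suc t)))"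
      (is "?I = _")
    by (rule nn_integral_gibbs_reweight) auto
  also have "\<dots> = (\<integral>\<^sup>+x. ennreal (exp (phi (Suc t) x - phi (Suc (Suc t)) x))
      * ennreal (exp (phi (Suc (Suc t)) x - phi (Suc t) x)) \<partial>\<mu>)"
    by (rule nn_integral_gibbs_even_fst) measurable
  also have "\<dots> = (\<integral>\<^sup>+x. 1 \<partial>\<mu>)"
    by (simp add: ennreal_exp_add[symmetric])
  finally show "?I \<le> 1" by (simp add: M1.emeasure_space_1)
qed measurable

lemma ext_integral_gibbs_even_phi_diff_le:
  "ext_integral (gibbs (phi (Suc t)) (psi (Suc t))) (\<lambda>z. phi (Suc t) (fst z) - phi (Suc (Suc t)) (fst z))
    \<le> ext_integral (gibbs (phi (Suc t)) (psi (Suc t))) (\<lambda>z. psi (Suc t) (snd z) - psi t (snd z))"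
proof (rule ext_integral_mono_exp_diff[OF prob_space_gibbs_even])
  have "(\<integral>\<^sup>+z. ennreal (exp ((phi (Suc t) (fst z) - phi (Suc (Suc t)) (fst z)) - (psi (Suc t) (snd z) - psi t (snd z))))
        \<partial>gibbs (phi (Suc t)) (psi (Suc t)))
      = (\<integral>\<^sup>+z. ennreal (exp (phi (Suc t) (fst z) - phi (Suc (Suc t)) (fst z))) \<partial>gibbs (phi (Suc t)) (psi t))"
      (is "?I = _")
    by (rule nn_integral_gibbs_reweight) auto
  also have "\<dots> = (\<integral>\<^sup>+x. ennreal (exp (phi (Suc t) x - phi (Suc (Suc t)) x)) \<partial>\<mu>)"
    by (rule nn_integral_gibbs_odd_fst) measurable
  also have "\<dots> = 1"
    by (rule nn_integral_exp_phi_diff)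
  finally show "?I \<le> 1" by simp
qed measurable

lemma rel_entropy_mu_sk_mu_even_nonneg: "0 \<le> rel_entropy \<mu> (sk_mu_even \<mu> \<nu> c t)"
proof -
  have "ext_integral \<mu> (\<lambda>_. 0) \<le> ext_integral \<mu> (\<lambda>x. phi (Suc t) x - phi t x)"
    by (rule ext_integral_mono_exp_diff[OF prob_space_\<mu>]) (simp_all add: nn_integral_exp_phi_diff)
  then show ?thesis by (simp add: rel_entropy_mu_sk_mu_even ext_integral_def)
qed

lemma rel_entropy_sk_mu_even_Suc_le:
  "rel_entropy (sk_mu_even \<mu> \<nu> c (Suc t)) \<mu> + rel_entropy \<mu> (sk_mu_even \<mu> \<nu> c (Suc t))
    \<le> rel_entropy \<mu> (sk_mu_even \<mu> \<nu> c t) + rel_entropy \<nu> (sk_nu_odd \<mu> \<nu> c t)"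
  unfolding add.commute[of "rel_entropy \<mu> (sk_mu_even \<mu> \<nu> c t)"]
proof (rule add_mono)
  have "ext_integral (gibbs (phi (Suc t)) (psi (Suc t))) (\<lambda>z. phi (Suc t) (fst z) - phi (Suc (Suc t)) (fst z))
      = rel_entropy (sk_mu_even \<mu> \<nu> c (Suc t)) \<mu>"
    unfolding rel_entropy_sk_mu_even_mu by (rule ext_integral_gibbs_even_fst) measurable
  moreover have "ext_integral (gibbs (phi (Suc t)) (psi (Suc t))) (\<lambda>z. psi (Suc t) (snd z) - psi t (snd z))
      = rel_entropy \<nu> (sk_nu_odd \<mu> \<nu> c t)"
    unfolding rel_entropy_nu_sk_nu_odd by (rule ext_integral_gibbs_even_snd) measurable
  ultimately show "rel_entropy (sk_mu_even \<mu> \<nu> c (Suc t)) \<mu> \<le> rel_entropy \<nu> (sk_nu_odd \<mu> \<nu> c t)"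
    using ext_integral_gibbs_even_phi_diff_le[of t] by simp
next
  have "ext_integral (gibbs (phi (Suc t)) (psi t)) (\<lambda>z. phi (Suc (Suc t)) (fst z) - phi (Suc t) (fst z))
      = rel_entropy \<mu> (sk_mu_even \<mu> \<nu> c (Suc t))"
    unfolding rel_entropy_mu_sk_mu_even by (rule ext_integral_gibbs_odd_fst) measurable
  moreover have "ext_integral (gibbs (phi (Suc t)) (psi t)) (\<lambda>z. phi (Suc t) (fst z) - phi t (fst z))
      = rel_entropy \<mu> (sk_mu_even \<mu> \<nu> c t)"
    unfolding rel_entropy_mu_sk_mu_even by (rule ext_integral_gibbs_odd_fst) measurable
  ultimately show "rel_entropy \<mu> (sk_mu_even \<mu> \<nu> c (Suc t)) \<le> rel_entropy \<mu> (sk_mu_even \<mu> \<nu> c t)"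
    using ext_integral_gibbs_odd_phi_diff_le[of t] ext_integral_gibbs_odd_psi_diff_le[of t] by simp
qed

end

section \<open>Entropy relative to a coupling of finite cost\<close>

locale sinkhorn_coupling = sinkhorn +
  fixes \<pi> :: "('a \<times> 'b) measure"
  assumes coupling: "\<pi> \<in> couplings \<mu> \<nu>"
    and entropic_cost_finite: "\<bar>entropic_cost \<mu> \<nu> c \<pi>\<bar> \<noteq> \<infinity>"
begin

lemma sets_\<pi>[measurable_cong]: "sets \<pi> = sets M"
  and prob_space_\<pi>: "prob_space \<pi>"
  and distr_\<pi>_fst: "distr \<pi> \<mu> fst = \<mu>"
  and distr_\<pi>_snd: "distr \<pi> \<nu> snd = \<nu>"
  using coupling by (simp_all add: couplings_def)

lemma measurable_\<pi>_fst[measurable]: "fst \<in> measurable \<pi> \<mu>"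
  and measurable_\<pi>_snd[measurable]: "snd \<in> measurable \<pi> \<nu>"
  by (simp_all add: measurable_cong_sets[OF sets_\<pi> refl])

lemma integrable_c_and_rel_entropy_finite: "integrable \<pi> c \<and> \<bar>rel_entropy \<pi> M\<bar> \<noteq> \<infinity>"
proof -
  let ?P = "\<integral>\<^sup>+z. ennreal (c z) \<partial>\<pi>" and ?N = "\<integral>\<^sup>+z. ennreal (- c z) \<partial>\<pi>"
  have "\<bar>enn2ereal ?P - enn2ereal ?N + rel_entropy \<pi> M\<bar> \<noteq> \<infinity>"
    using entropic_cost_finite by (simp add: entropic_cost_def ennreal_max_0)
  then have "?P \<noteq> \<infinity> \<and> ?N \<noteq> \<infinity> \<and> \<bar>rel_entropy \<pi> M\<bar> \<noteq> \<infinity>"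
    by (cases ?P; cases ?N; cases "rel_entropy \<pi> M") auto
  then show ?thesis by (simp add: real_integrable_def)
qed

lemma integrable_c: "integrable \<pi> c"
  and rel_entropy_\<pi>_finite: "\<bar>rel_entropy \<pi> M\<bar> \<noteq> \<infinity>"
  using integrable_c_and_rel_entropy_finite by auto

lemma absolutely_continuous_\<pi>: "absolutely_continuous M \<pi>"
proof (rule ccontr)
  assume "\<not> absolutely_continuous M \<pi>"
  then show False using rel_entropy_\<pi>_finite by (simp add: rel_entropy_def)
qed

definition dens :: "'a \<times> 'b \<Rightarrow> real" where
  "dens z = enn2real (RN_deriv M \<pi> z)"

lemma dens_measurable[measurable]: "dens \<in> borel_measurable M"
  unfolding dens_def by measurable

lemma dens_nonneg: "0 \<le> dens z"
  by (simp add: dens_def)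

lemma density_dens: "density M dens = \<pi>"
proof -
  have "AE z in M. RN_deriv M \<pi> z \<noteq> \<infinity>"
    using prob_space_imp_sigma_finite[OF prob_space_\<pi>]
    by (rule RN_deriv_finite[OF _ absolutely_continuous_\<pi> sets_\<pi>])
  then have "AE z in M. RN_deriv M \<pi> z = ennreal (dens z)"
    by eventually_elim (simp add: dens_def less_top[symmetric])
  then have "density M dens = density M (RN_deriv M \<pi>)"
    by (intro density_cong) (auto elim: AE_mp)
  also have "\<dots> = \<pi>"
    by (rule density_RN_deriv[OF absolutely_continuous_\<pi> sets_\<pi>])
  finally show ?thesis .
qed

lemma AE_dens_pos: "AE z in \<pi>. dens z > 0"
proof -
  have "AE z in density M dens. dens z > 0"
    by (subst AE_density) (auto intro!: AE_I2 simp: dens_def)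
  then show ?thesis unfolding density_dens .
qed

lemma integrable_ln_dens: "integrable \<pi> (\<lambda>z. ln (dens z))"
  using rel_entropy_\<pi>_finite
  by (subst integrable_iff_ext_integral_finite)
    (simp_all add: rel_entropy_eq_ext_integral[OF sets_\<pi> absolutely_continuous_\<pi>] dens_def)

lemma nn_integral_\<pi>_fst:
  assumes "g \<in> borel_measurable \<mu>"
  shows "(\<integral>\<^sup>+z. g (fst z) \<partial>\<pi>) = (\<integral>\<^sup>+x. g x \<partial>\<mu>)"
  using nn_integral_distr[of fst \<pi> \<mu> g] assms by (simp add: distr_\<pi>_fst)

lemma nn_integral_\<pi>_snd:
  assumes "g \<in> borel_measurable \<nu>"
  shows "(\<integral>\<^sup>+z. g (snd z) \<partial>\<pi>) = (\<integral>\<^sup>+y. g y \<partial>\<nu>)"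
  using nn_integral_distr[of snd \<pi> \<nu> g] assms by (simp add: distr_\<pi>_snd)

lemma integrable_\<pi>_fst:
  fixes h :: "'a \<Rightarrow> real"
  assumes "integrable \<mu> h"
  shows "integrable \<pi> (\<lambda>z. h (fst z))" "(\<integral>z. h (fst z) \<partial>\<pi>) = (\<integral>x. h x \<partial>\<mu>)"
  using assms integrable_distr_eq[of fst \<pi> \<mu> h] integral_distr[of fst \<pi> \<mu> h]
  by (simp_all add: distr_\<pi>_fst)

lemma integrable_\<pi>_snd:
  fixes h :: "'b \<Rightarrow> real"
  assumes "integrable \<nu> h"
  shows "integrable \<pi> (\<lambda>z. h (snd z))" "(\<integral>z. h (snd z) \<partial>\<pi>) = (\<integral>y. h y \<partial>\<nu>)"
  using assms integrable_distr_eq[of snd \<pi> \<nu> h] integral_distr[of snd \<pi> \<nu> h]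
  by (simp_all add: distr_\<pi>_snd)

lemma nn_integral_\<pi>_exp_diff_ln_dens_le:
  assumes [measurable]: "w \<in> borel_measurable M"
  shows "(\<integral>\<^sup>+z. ennreal (exp (w z - ln (dens z))) \<partial>\<pi>) \<le> (\<integral>\<^sup>+z. ennreal (exp (w z)) \<partial>M)"
proof -
  have "(\<integral>\<^sup>+z. ennreal (exp (w z - ln (dens z))) \<partial>\<pi>)
      = (\<integral>\<^sup>+z. ennreal (exp (w z - ln (dens z))) \<partial>density M dens)"
    by (simp only: density_dens)
  also have "\<dots> = (\<integral>\<^sup>+z. dens z * ennreal (exp (w z - ln (dens z))) \<partial>M)"
    by (rule nn_integral_density) measurable
  also have "\<dots> \<le> (\<integral>\<^sup>+z. ennreal (exp (w z)) \<partial>M)"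
  proof (intro nn_integral_mono)
    fix z
    have "dens z * exp (w z - ln (dens z)) \<le> exp (w z)"
      using dens_nonneg[of z] by (cases "dens z > 0") (simp_all add: exp_diff)
    with dens_nonneg[of z] show "dens z * ennreal (exp (w z - ln (dens z))) \<le> ennreal (exp (w z))"
      by (simp add: ennreal_mult[symmetric] ennreal_leI)
  qed
  finally show ?thesis .
qed

text \<open>Finite entropy of \<open>\<pi>\<close> bounds the potentials of any normalized Gibbs measure from above
  on average, via \<open>a \<oplus> b = (a \<oplus> b - c - ln dens) + (ln dens + c)\<close>.\<close>
lemma nn_integral_\<pi>_potentials_finite:
  assumes [measurable]: "a \<in> borel_measurable \<mu>" "b \<in> borel_measurable \<nu>"
    and "prob_space (gibbs a b)"
  shows "(\<integral>\<^sup>+z. ennreal (a (fst z) + b (snd z)) \<partial>\<pi>) < \<infinity>"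
proof (rule nn_integral_ennreal_finite_le_add)
  define w where "w z = a (fst z) + b (snd z) - c z" for z
  have [measurable]: "w \<in> borel_measurable M" unfolding w_def by measurable
  have "(\<integral>\<^sup>+z. ennreal (exp (w z - ln (dens z))) \<partial>\<pi>) \<le> (\<integral>\<^sup>+z. ennreal (exp (w z)) \<partial>M)"
    by (rule nn_integral_\<pi>_exp_diff_ln_dens_le) measurable
  also have "\<dots> = 1"
    using prob_space.emeasure_space_1[OF assms(3)] nn_integral_gibbs[of a b "\<lambda>_. 1"] by (simp add: w_def)
  finally show "(\<integral>\<^sup>+z. ennreal (w z - ln (dens z)) \<partial>\<pi>) < \<infinity>"
    using nn_integral_ennreal_le_exp[of \<pi> "\<lambda>z. w z - ln (dens z)"] by (simp add: order.strict_trans1)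
  show "(\<integral>\<^sup>+z. ennreal (ln (dens z) + c z) \<partial>\<pi>) < \<infinity>"
    using Bochner_Integration.integrable_add[OF integrable_ln_dens integrable_c]
    by (simp add: real_integrable_def less_top)
  show "(\<lambda>z. w z - ln (dens z)) \<in> borel_measurable \<pi>" "(\<lambda>z. ln (dens z) + c z) \<in> borel_measurable \<pi>"
    by measurable
  show "a (fst z) + b (snd z) \<le> (w z - ln (dens z)) + (ln (dens z) + c z)" for z
    by (simp add: w_def)
qed

lemma integrable_fst_of_gibbs:
  assumes [measurable]: "a \<in> borel_measurable \<mu>" "b \<in> borel_measurable \<nu>"
    and "prob_space (gibbs a b)" "integrable \<nu> b" "(\<integral>\<^sup>+x. ennreal (- a x) \<partial>\<mu>) < \<infinity>"
  shows "integrable \<mu> a"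
proof -
  have "(\<integral>\<^sup>+x. ennreal (a x) \<partial>\<mu>) = (\<integral>\<^sup>+z. ennreal (a (fst z)) \<partial>\<pi>)"
    by (rule nn_integral_\<pi>_fst[symmetric]) measurable
  also have "\<dots> \<le> (\<integral>\<^sup>+z. ennreal (a (fst z) + b (snd z)) \<partial>\<pi>) + (\<integral>\<^sup>+z. ennreal (- b (snd z)) \<partial>\<pi>)"
  proof (rule nn_integral_ennreal_le_add)
    show "(\<lambda>x. a (fst x) + b (snd x)) \<in> borel_measurable \<pi>" by measurable
    show "(\<lambda>x. - b (snd x)) \<in> borel_measurable \<pi>" by measurable
  qed simp
  also have "(\<integral>\<^sup>+z. ennreal (- b (snd z)) \<partial>\<pi>) = (\<integral>\<^sup>+y. ennreal (- b y) \<partial>\<nu>)"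
    by (rule nn_integral_\<pi>_snd) measurable
  also have "(\<integral>\<^sup>+z. ennreal (a (fst z) + b (snd z)) \<partial>\<pi>) + (\<integral>\<^sup>+y. ennreal (- b y) \<partial>\<nu>) < \<infinity>"
    using nn_integral_\<pi>_potentials_finite[OF assms(1-3)] assms(4) by (simp add: real_integrable_def less_top)
  finally show ?thesis
    using assms(5) by (simp add: real_integrable_def less_top)
qed

lemma integrable_snd_of_gibbs:
  assumes [measurable]: "a \<in> borel_measurable \<mu>" "b \<in> borel_measurable \<nu>"
    and "prob_space (gibbs a b)" "integrable \<mu> a" "(\<integral>\<^sup>+y. ennreal (- b y) \<partial>\<nu>) < \<infinity>"
  shows "integrable \<nu> b"
proof -
  have "(\<integral>\<^sup>+y. ennreal (b y) \<partial>\<nu>) = (\<integral>\<^sup>+z. ennreal (b (snd z)) \<partial>\<pi>)"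
    by (rule nn_integral_\<pi>_snd[symmetric]) measurable
  also have "\<dots> \<le> (\<integral>\<^sup>+z. ennreal (a (fst z) + b (snd z)) \<partial>\<pi>) + (\<integral>\<^sup>+z. ennreal (- a (fst z)) \<partial>\<pi>)"
  proof (rule nn_integral_ennreal_le_add)
    show "(\<lambda>x. a (fst x) + b (snd x)) \<in> borel_measurable \<pi>" by measurable
    show "(\<lambda>x. - a (fst x)) \<in> borel_measurable \<pi>" by measurable
  qed simp
  also have "(\<integral>\<^sup>+z. ennreal (- a (fst z)) \<partial>\<pi>) = (\<integral>\<^sup>+x. ennreal (- a x) \<partial>\<mu>)"
    by (rule nn_integral_\<pi>_fst) measurable
  also have "(\<integral>\<^sup>+z. ennreal (a (fst z) + b (snd z)) \<partial>\<pi>) + (\<integral>\<^sup>+x. ennreal (- a x) \<partial>\<mu>) < \<infinity>"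
    using nn_integral_\<pi>_potentials_finite[OF assms(1-3)] assms(4) by (simp add: real_integrable_def less_top)
  finally show ?thesis
    using assms(5) by (simp add: real_integrable_def less_top)
qed

lemma nn_integral_exp_neg_psi_0_finite: "(\<integral>\<^sup>+y. ennreal (exp (0 - psi 0 y)) \<partial>\<nu>) < \<infinity>"
proof -
  have "(\<integral>\<^sup>+z. 1 \<partial>gibbs (phi 0) (\<lambda>_. 0)) = (\<integral>\<^sup>+y. ennreal (exp (0 - psi_of (phi 0) y)) * 1 \<partial>\<nu>)"
    by (rule nn_integral_gibbs_snd_normalized[OF _ _ _ AE_Z_phi_finite]) measurable
  moreover have "(\<integral>\<^sup>+z. 1 \<partial>gibbs (phi 0) (\<lambda>_. 0)) < \<infinity>"
    using finite_measure.emeasure_finite[OF finite_measure_gibbs_0] by (simp add: less_top)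
  ultimately show ?thesis
    by (simp only: psi_eq mult_1_right)
qed

lemma integrable_phi_psi: "integrable \<mu> (phi t) \<and> integrable \<nu> (psi t)"
proof (induction t)
  case 0
  have "integrable \<nu> (psi 0)"
    by (rule integrable_snd_of_gibbs[OF phi_measurable psi_measurable prob_space_gibbs_even _
          nn_integral_neg_finite_of_exp_diff[OF integrable_zero psi_measurable nn_integral_exp_neg_psi_0_finite]])
      simp
  then show ?case by simp
next
  case (Suc t)
  then have "(\<integral>\<^sup>+x. ennreal (- phi (Suc t) x) \<partial>\<mu>) < \<infinity>"
    using nn_integral_exp_phi_diff[of t] by (intro nn_integral_neg_finite_of_exp_diff[of \<mu> "phi t"]) simp_all
  with Suc have phi_Suc_integrable: "integrable \<mu> (phi (Suc t))"
    using integrable_fst_of_gibbs[OF phi_measurable psi_measurable prob_space_gibbs_odd] by blast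
  from Suc have "(\<integral>\<^sup>+y. ennreal (- psi (Suc t) y) \<partial>\<nu>) < \<infinity>"
    using nn_integral_exp_psi_diff[of t] by (intro nn_integral_neg_finite_of_exp_diff[of \<nu> "psi t"]) simp_all
  with phi_Suc_integrable have "integrable \<nu> (psi (Suc t))"
    using integrable_snd_of_gibbs[OF phi_measurable psi_measurable prob_space_gibbs_even] by blast
  with phi_Suc_integrable show ?case ..
qed

lemma rel_entropy_sk_pi_even:
  "rel_entropy \<pi> (sk_pi_even \<mu> \<nu> c t)
    = ereal ((\<integral>z. ln (dens z) \<partial>\<pi>) + (\<integral>z. c z \<partial>\<pi>) - (\<integral>x. phi t x \<partial>\<mu>) - (\<integral>y. psi t y \<partial>\<nu>))"
proof -
  define p where "p z = exp (phi t (fst z) + psi t (snd z) - c z)" for z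
  have [measurable]: "p \<in> borel_measurable M" unfolding p_def by measurable
  have gibbs_eq: "gibbs (phi t) (psi t) = density M p"
    by (simp add: gibbs_def p_def split_beta')
  have "rel_entropy \<pi> (sk_pi_even \<mu> \<nu> c t) = rel_entropy (density M dens) (density M p)"
    by (simp only: density_dens sk_pi_even_eq gibbs_eq)
  also have "\<dots> = ext_integral \<pi> (\<lambda>z. ln (dens z / p z))"
    using prob_space.finite_measure[OF prob_space_gibbs_even[of t]]
    by (subst rel_entropy_density) (simp_all add: gibbs_eq density_dens p_def dens_nonneg)
  also have "\<dots> = ext_integral \<pi> (\<lambda>z. ln (dens z) + c z - phi t (fst z) - psi t (snd z))"
    using AE_dens_pos by (intro ext_integral_cong_AE) (auto simp: ln_div p_def elim: AE_mp)
  also have "\<dots> = ereal (\<integral>z. ln (dens z) + c z - phi t (fst z) - psi t (snd z) \<partial>\<pi>)"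
    using integrable_ln_dens integrable_c integrable_phi_psi[of t]
      integrable_\<pi>_fst(1)[of "phi t"] integrable_\<pi>_snd(1)[of "psi t"]
    by (intro ext_integral_eq_integral) auto
  also have "(\<integral>z. ln (dens z) + c z - phi t (fst z) - psi t (snd z) \<partial>\<pi>)
      = (\<integral>z. ln (dens z) \<partial>\<pi>) + (\<integral>z. c z \<partial>\<pi>) - (\<integral>x. phi t x \<partial>\<mu>) - (\<integral>y. psi t y \<partial>\<nu>)"
    using integrable_ln_dens integrable_c integrable_phi_psi[of t]
      integrable_\<pi>_fst[of "phi t"] integrable_\<pi>_snd[of "psi t"]
    by simp
  finally show ?thesis .
qed

lemma rel_entropy_sk_pi_even_Suc_diff:
  "rel_entropy \<pi> (sk_pi_even \<mu> \<nu> c (Suc t)) - rel_entropy \<pi> (sk_pi_even \<mu> \<nu> c t)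
    = - (rel_entropy \<mu> (sk_mu_even \<mu> \<nu> c t) + rel_entropy \<nu> (sk_nu_odd \<mu> \<nu> c t))"
  using integrable_phi_psi[of t] integrable_phi_psi[of "Suc t"]
  by (simp add: rel_entropy_sk_pi_even rel_entropy_mu_sk_mu_even rel_entropy_nu_sk_nu_odd
      ext_integral_eq_integral)

end

theorem lemma4p2:
  fixes \<mu> :: "('a::polish_space) measure" and \<nu> :: "('b::polish_space) measure"
    and c :: "'a \<times> 'b \<Rightarrow> real" and \<pi>s :: "('a \<times> 'b) measure" and t :: nat
  assumes "prob_space \<mu>" "sets \<mu> = sets borel"
    and "prob_space \<nu>" "sets \<nu> = sets borel"
    and "c \<in> borel_measurable (\<mu> \<Otimes>\<^sub>M \<nu>)"
    and "integrable (\<mu> \<Otimes>\<^sub>M \<nu>) (\<lambda>z. exp (- c z))"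
    and "\<pi>s \<in> couplings \<mu> \<nu>"
    and "\<forall>\<pi> \<in> couplings \<mu> \<nu>. entropic_cost \<mu> \<nu> c \<pi>s \<le> entropic_cost \<mu> \<nu> c \<pi>"
    and "\<bar>entropic_cost \<mu> \<nu> c \<pi>s\<bar> \<noteq> \<infinity>"
  shows "rel_entropy \<pi>s (sk_pi_even \<mu> \<nu> c (Suc t)) - rel_entropy \<pi>s (sk_pi_even \<mu> \<nu> c t)
           = - (rel_entropy \<mu> (sk_mu_even \<mu> \<nu> c t) + rel_entropy \<nu> (sk_nu_odd \<mu> \<nu> c t))
       \<and> - (rel_entropy \<mu> (sk_mu_even \<mu> \<nu> c t) + rel_entropy \<nu> (sk_nu_odd \<mu> \<nu> c t))
           \<le> - (rel_entropy (sk_mu_even \<mu> \<nu> c (Suc t)) \<mu> + rel_entropy \<mu> (sk_mu_even \<mu> \<nu> c (Suc t)))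
       \<and> - (rel_entropy (sk_mu_even \<mu> \<nu> c (Suc t)) \<mu> + rel_entropy \<mu> (sk_mu_even \<mu> \<nu> c (Suc t)))
           \<le> - rel_entropy (sk_mu_even \<mu> \<nu> c (Suc t)) \<mu>"
proof -
  interpret sinkhorn_coupling \<mu> \<nu> c \<pi>s
    using assms by (intro sinkhorn_coupling.intro sinkhorn.intro sinkhorn_coupling_axioms.intro) auto
  note rel_entropy_sk_mu_even_Suc_le[of t]
  moreover have "rel_entropy (sk_mu_even \<mu> \<nu> c (Suc t)) \<mu>
      \<le> rel_entropy (sk_mu_even \<mu> \<nu> c (Suc t)) \<mu> + rel_entropy \<mu> (sk_mu_even \<mu> \<nu> c (Suc t))"
    using rel_entropy_mu_sk_mu_even_nonneg by (rule add_increasing2) simp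
  ultimately show ?thesis
    using rel_entropy_sk_pi_even_Suc_diff[of t] by (simp only: ereal_minus_le_minus conj_absorb)
qed

end
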